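(* Let $G$ be a countable group, let $X$ be an incontractible $G$-flow and let $Y$ be a minimal, proximal $G$-flow. Then $X$ and $Y$ are disjoint.
   Context: A $G$-flow is a compact Hausdorff space with an action of $G$ by homeomorphisms. A point $x$ of a $G$-flow is minimal if $\overline{G\cdot x}$ is a minimal flow (every orbit in it dense). A $G$-flow $X$ is incontractible if for every $n\in\mathbb{N}$ the minimal points of $X^n$ (diagonal action) are dense in $X^n$. A $G$-flow $Y$ is proximal if for all $y_1,y_2\in Y$ there exist $z\in Y$ and a net $(g_i)$ in $G$ with $g_iy_1\to z$ and $g_iy_2\to z$. Two $G$-flows $X,Y$ are disjoint if the only closed $G$-invariant subset of $X\times Y$ projecting onto both factors is $X\times Y$. *)

theory Defs
  imports "HOL-Analysis.Analysis" "HOL-Algebra.Group"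
begin

definition gflow :: "('g, 'm) monoid_scheme \<Rightarrow> 'x topology \<Rightarrow> ('g \<Rightarrow> 'x \<Rightarrow> 'x) \<Rightarrow> bool" where
  "gflow G X act \<longleftrightarrow> group G \<and> compact_space X \<and> Hausdorff_space X
     \<and> (\<forall>g\<in>carrier G. homeomorphic_map X X (act g))
     \<and> (\<forall>x\<in>topspace X. act \<one>\<^bsub>G\<^esub> x = x)
     \<and> (\<forall>g\<in>carrier G. \<forall>h\<in>carrier G. \<forall>x\<in>topspace X.
           act (g \<otimes>\<^bsub>G\<^esub> h) x = act g (act h x))"

definition orbit :: "('g, 'm) monoid_scheme \<Rightarrow> ('g \<Rightarrow> 'x \<Rightarrow> 'x) \<Rightarrow> 'x \<Rightarrow> 'x set" where
  "orbit G act x = (\<lambda>g. act g x) ` carrier G"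

definition minimal_point :: "('g, 'm) monoid_scheme \<Rightarrow> 'x topology \<Rightarrow> ('g \<Rightarrow> 'x \<Rightarrow> 'x) \<Rightarrow> 'x \<Rightarrow> bool" where
  "minimal_point G X act x \<longleftrightarrow> x \<in> topspace X \<and>
     (\<forall>z \<in> X closure_of orbit G act x. X closure_of orbit G act z = X closure_of orbit G act x)"

definition minimal_flow :: "('g, 'm) monoid_scheme \<Rightarrow> 'x topology \<Rightarrow> ('g \<Rightarrow> 'x \<Rightarrow> 'x) \<Rightarrow> bool" where
  "minimal_flow G X act \<longleftrightarrow> gflow G X act \<and>
     (\<forall>x\<in>topspace X. X closure_of orbit G act x = topspace X)"

definition power_space :: "'x topology \<Rightarrow> nat \<Rightarrow> (nat \<Rightarrow> 'x) topology" where
  "power_space X n = product_topology (\<lambda>i. X) {..<n}"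

definition power_act :: "('g \<Rightarrow> 'x \<Rightarrow> 'x) \<Rightarrow> nat \<Rightarrow> 'g \<Rightarrow> (nat \<Rightarrow> 'x) \<Rightarrow> (nat \<Rightarrow> 'x)" where
  "power_act act n g u = restrict (\<lambda>i. act g (u i)) {..<n}"

definition incontractible :: "('g, 'm) monoid_scheme \<Rightarrow> 'x topology \<Rightarrow> ('g \<Rightarrow> 'x \<Rightarrow> 'x) \<Rightarrow> bool" where
  "incontractible G X act \<longleftrightarrow> gflow G X act \<and>
     (\<forall>n::nat. power_space X n closure_of
         {u. minimal_point G (power_space X n) (power_act act n) u} = topspace (power_space X n))"

text \<open>Proximality; nets in G are rendered as proper filters on G concentrated on carrier G.\<close>
definition proximal :: "('g, 'm) monoid_scheme \<Rightarrow> 'y topology \<Rightarrow> ('g \<Rightarrow> 'y \<Rightarrow> 'y) \<Rightarrow> bool" where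
  "proximal G Y act \<longleftrightarrow> gflow G Y act \<and>
     (\<forall>y1\<in>topspace Y. \<forall>y2\<in>topspace Y. \<exists>z\<in>topspace Y. \<exists>F :: 'g filter.
        F \<noteq> bot \<and> eventually (\<lambda>g. g \<in> carrier G) F \<and>
        limitin Y (\<lambda>g. act g y1) z F \<and> limitin Y (\<lambda>g. act g y2) z F)"

definition disjoint_flows :: "('g, 'm) monoid_scheme \<Rightarrow> 'x topology \<Rightarrow> ('g \<Rightarrow> 'x \<Rightarrow> 'x)
     \<Rightarrow> 'y topology \<Rightarrow> ('g \<Rightarrow> 'y \<Rightarrow> 'y) \<Rightarrow> bool" where
  "disjoint_flows G X a Y b \<longleftrightarrow>
     (\<forall>W. closedin (prod_topology X Y) W
        \<and> (\<forall>g\<in>carrier G. \<forall>p\<in>W. (a g (fst p), b g (snd p)) \<in> W)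
        \<and> fst ` W = topspace X \<and> snd ` W = topspace Y
        \<longrightarrow> W = topspace X \<times> topspace Y)"

end

theory Submission
  imports Defs
begin

text \<open>Fix a closed invariant $W \subseteq X \times Y$ with full projection to $X$. For a minimal
  point $u$ of $X^n$, one finds a single $z$ with $(u_i, z) \in W$ for all $i$, one coordinate at a
  time: if $z$ is related to $v_0, \dots, v_{k-1}$ and $y$ to $v_k$, proximality of $(z, y)$ together
  with compactness of $X^n$ yields a point $w$ of the orbit closure of $v$ and a common partner of
  $w_0, \dots, w_k$; minimality of $u$ makes the orbit closure independent of the chosen point.
  If $W$ missed a box $U \times V$, minimality and compactness of $Y$ give finitely many
  $h_1, \dots, h_m$ with $\bigcup_i h_i^{-1} V = Y$; density of minimal points in $X^m$ gives a
  minimal $u$ with $h_i u_i \in U$ for all $i$, and then some $h_i$ moves the pair $(u_i, z) \in W$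
  into $U \times V$.\<close>

definition prod_act :: "('g \<Rightarrow> 'x \<Rightarrow> 'x) \<Rightarrow> ('g \<Rightarrow> 'y \<Rightarrow> 'y) \<Rightarrow> 'g \<Rightarrow> 'x \<times> 'y \<Rightarrow> 'x \<times> 'y" where
  "prod_act \<alpha> \<beta> g = map_prod (\<alpha> g) (\<beta> g)"

definition invariant_set :: "('g, 'm) monoid_scheme \<Rightarrow> ('g \<Rightarrow> 'x \<Rightarrow> 'x) \<Rightarrow> 'x set \<Rightarrow> bool" where
  "invariant_set G act S \<longleftrightarrow> (\<forall>g\<in>carrier G. \<forall>p\<in>S. act g p \<in> S)"

lemma gflowI:
  assumes G: "group G" and "compact_space X" "Hausdorff_space X"
    and cont: "\<And>g. g \<in> carrier G \<Longrightarrow> continuous_map X X (act g)"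
    and one: "\<And>x. x \<in> topspace X \<Longrightarrow> act \<one>\<^bsub>G\<^esub> x = x"
    and mult: "\<And>g h x. \<lbrakk>g \<in> carrier G; h \<in> carrier G; x \<in> topspace X\<rbrakk>
                 \<Longrightarrow> act (g \<otimes>\<^bsub>G\<^esub> h) x = act g (act h x)"
  shows "gflow G X act"
proof -
  have "homeomorphic_map X X (act g)" if g: "g \<in> carrier G" for g
  proof -
    have g': "inv\<^bsub>G\<^esub> g \<in> carrier G"
      using G g by (rule group.inv_closed)
    have "homeomorphic_maps X X (act g) (act (inv\<^bsub>G\<^esub> g))"
      unfolding homeomorphic_maps_def
      using cont[OF g] cont[OF g'] mult[OF g g'] mult[OF g' g] one
      by (simp add: group.l_inv[OF G g] group.r_inv[OF G g])
    then show ?thesis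
      using homeomorphic_maps_imp_map by blast
  qed
  then show ?thesis
    unfolding gflow_def using assms by blast
qed

lemma gflow_group: "gflow G X act \<Longrightarrow> group G"
  unfolding gflow_def by simp

lemma gflow_compact_space: "gflow G X act \<Longrightarrow> compact_space X"
  unfolding gflow_def by simp

lemma gflow_continuous_map: "gflow G X act \<Longrightarrow> g \<in> carrier G \<Longrightarrow> continuous_map X X (act g)"
  unfolding gflow_def using homeomorphic_imp_continuous_map by blast

lemma gflow_act_topspace: "gflow G X act \<Longrightarrow> g \<in> carrier G \<Longrightarrow> x \<in> topspace X \<Longrightarrow> act g x \<in> topspace X"
  using continuous_map_funspace[OF gflow_continuous_map] by (rule funcset_mem)

lemma gflow_act_one: "gflow G X act \<Longrightarrow> x \<in> topspace X \<Longrightarrow> act \<one>\<^bsub>G\<^esub> x = x"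
  unfolding gflow_def by simp

lemma gflow_act_mult:
  "\<lbrakk>gflow G X act; g \<in> carrier G; h \<in> carrier G; x \<in> topspace X\<rbrakk>
    \<Longrightarrow> act (g \<otimes>\<^bsub>G\<^esub> h) x = act g (act h x)"
  unfolding gflow_def by simp

lemma gflow_act_act_inv:
  assumes X: "gflow G X act" and g: "g \<in> carrier G" and x: "x \<in> topspace X"
  shows "act g (act (inv\<^bsub>G\<^esub> g) x) = x"
proof -
  have G: "group G"
    using X by (rule gflow_group)
  then have "act g (act (inv\<^bsub>G\<^esub> g) x) = act (g \<otimes>\<^bsub>G\<^esub> inv\<^bsub>G\<^esub> g) x"
    using gflow_act_mult[OF X g _ x] g by (simp add: group.inv_closed)
  then show ?thesis
    using gflow_act_one[OF X x] G g by (simp add: group.r_inv)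
qed

lemma topspace_power_space: "topspace (power_space X n) = (\<Pi>\<^sub>E i\<in>{..<n}. topspace X)"
  unfolding power_space_def by simp

lemma continuous_map_power_coordinate: "i < n \<Longrightarrow> continuous_map (power_space X n) X (\<lambda>u. u i)"
  unfolding power_space_def by (rule continuous_map_product_projection) simp

lemma gflow_power:
  assumes X: "gflow G X act"
  shows "gflow G (power_space X n) (power_act act n)"
proof (rule gflowI)
  show "group G" "compact_space (power_space X n)" "Hausdorff_space (power_space X n)"
    using X unfolding gflow_def power_space_def
    by (auto simp: compact_space_product_topology Hausdorff_space_product_topology)
  show "continuous_map (power_space X n) (power_space X n) (power_act act n g)"
    if g: "g \<in> carrier G" for g
  proof -
    have "continuous_map (power_space X n) X (\<lambda>u. power_act act n g u i)" if "i \<in> {..<n}" for i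
      using that continuous_map_compose[OF continuous_map_power_coordinate gflow_continuous_map[OF X g]]
      by (simp add: power_act_def o_def)
    moreover have "power_act act n g ` topspace (power_space X n) \<subseteq> extensional {..<n}"
      unfolding power_act_def by auto
    ultimately have "continuous_map (power_space X n) (product_topology (\<lambda>i. X) {..<n}) (power_act act n g)"
      by (simp add: continuous_map_componentwise)
    then show ?thesis
      by (simp add: power_space_def)
  qed
  show "power_act act n \<one>\<^bsub>G\<^esub> u = u" if "u \<in> topspace (power_space X n)" for u
    using that gflow_act_one[OF X]
    unfolding topspace_power_space power_act_def by (fastforce simp: PiE_iff extensional_def)
  show "power_act act n (g \<otimes>\<^bsub>G\<^esub> h) u = power_act act n g (power_act act n h u)"
    if "g \<in> carrier G" "h \<in> carrier G" "u \<in> topspace (power_space X n)" for g h u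
    using that gflow_act_mult[OF X]
    unfolding topspace_power_space power_act_def by (auto simp: PiE_iff)
qed

lemma invariant_set_image_fst:
  assumes "invariant_set G (prod_act \<alpha> \<beta>) S"
  shows "invariant_set G \<alpha> (fst ` S)"
  unfolding invariant_set_def
proof (intro ballI)
  fix g x assume "g \<in> carrier G" "x \<in> fst ` S"
  then obtain y where "g \<in> carrier G" "(x, y) \<in> S"
    by force
  then have "(\<alpha> g x, \<beta> g y) \<in> S"
    using assms unfolding invariant_set_def prod_act_def by fastforce
  then show "\<alpha> g x \<in> fst ` S"
    by force
qed

lemma invariant_set_image_snd:
  assumes "invariant_set G (prod_act \<alpha> \<beta>) S"
  shows "invariant_set G \<beta> (snd ` S)"
  unfolding invariant_set_def
proof (intro ballI)
  fix g y assume "g \<in> carrier G" "y \<in> snd ` S"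
  then obtain x where "g \<in> carrier G" "(x, y) \<in> S"
    by force
  then have "(\<alpha> g x, \<beta> g y) \<in> S"
    using assms unfolding invariant_set_def prod_act_def by fastforce
  then show "\<beta> g y \<in> snd ` S"
    by force
qed

lemma in_closure_of_orbit_self:
  assumes "gflow G X act" "x \<in> topspace X"
  shows "x \<in> X closure_of orbit G act x"
proof -
  have "\<one>\<^bsub>G\<^esub> \<in> carrier G"
    using assms(1) unfolding gflow_def by (simp add: group.is_monoid monoid.one_closed)
  then have "x \<in> orbit G act x"
    unfolding orbit_def using gflow_act_one[OF assms] by force
  then show ?thesis
    using assms(2) closure_of_subset_Int by fastforce
qed

lemma closure_of_orbit_subset:
  assumes "closedin X S" "invariant_set G act S" "x \<in> S"
  shows "X closure_of orbit G act x \<subseteq> S"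
  using assms unfolding invariant_set_def orbit_def by (intro closure_of_minimal) auto

lemma invariant_set_closure_of_orbit:
  assumes X: "gflow G X act" and x: "x \<in> topspace X"
  shows "invariant_set G act (X closure_of orbit G act x)"
  unfolding invariant_set_def
proof (intro ballI)
  fix g p assume g: "g \<in> carrier G" and p: "p \<in> X closure_of orbit G act x"
  have "act g ` orbit G act x \<subseteq> orbit G act x"
  proof
    fix q assume "q \<in> act g ` orbit G act x"
    then obtain h where h: "h \<in> carrier G" "q = act g (act h x)"
      unfolding orbit_def by blast
    then have "q = act (g \<otimes>\<^bsub>G\<^esub> h) x"
      using gflow_act_mult[OF X g h(1) x] by simp
    moreover have "g \<otimes>\<^bsub>G\<^esub> h \<in> carrier G"
      using gflow_group[OF X] g h(1) by (simp add: group.is_monoid monoid.m_closed)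
    ultimately show "q \<in> orbit G act x"
      unfolding orbit_def by blast
  qed
  then have "X closure_of (act g ` orbit G act x) \<subseteq> X closure_of orbit G act x"
    by (rule closure_of_mono)
  then have "act g ` (X closure_of orbit G act x) \<subseteq> X closure_of orbit G act x"
    using continuous_map_image_closure_subset[OF gflow_continuous_map[OF X g]] by blast
  then show "act g p \<in> X closure_of orbit G act x"
    using p by blast
qed

lemma minimal_point_in_closure_of_orbit:
  assumes "gflow G X act" "minimal_point G X act u" "v \<in> X closure_of orbit G act u"
  shows "u \<in> X closure_of orbit G act v"
proof -
  have "u \<in> topspace X" "X closure_of orbit G act v = X closure_of orbit G act u"
    using assms(2,3) unfolding minimal_point_def by auto
  then show ?thesis
    using in_closure_of_orbit_self[OF assms(1)] by simp
qed

lemma proximalD: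
  assumes "proximal G Y b" "y1 \<in> topspace Y" "y2 \<in> topspace Y"
  obtains z F where "F \<noteq> bot" "eventually (\<lambda>g. g \<in> carrier G) F"
    "limitin Y (\<lambda>g. b g y1) z F" "limitin Y (\<lambda>g. b g y2) z F"
proof -
  have "\<forall>y1\<in>topspace Y. \<forall>y2\<in>topspace Y. \<exists>z\<in>topspace Y. \<exists>F :: 'a filter.
        F \<noteq> bot \<and> eventually (\<lambda>g. g \<in> carrier G) F \<and>
        limitin Y (\<lambda>g. b g y1) z F \<and> limitin Y (\<lambda>g. b g y2) z F"
    using assms(1) unfolding proximal_def by (rule conjunct2)
  then show ?thesis
    using assms(2,3) that by blast
qed

lemma proximal_diagonal_point:
  assumes prox: "proximal G Y b" and S: "closedin (prod_topology Y Y) S"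
    and inv: "invariant_set G (prod_act b b) S" and y: "(y1, y2) \<in> S"
  shows "\<exists>z. (z, z) \<in> S"
proof -
  have y12: "y1 \<in> topspace Y" "y2 \<in> topspace Y"
    using closedin_subset[OF S] y by auto
  obtain z F where F: "F \<noteq> bot" "eventually (\<lambda>g. g \<in> carrier G) F"
    and lim: "limitin Y (\<lambda>g. b g y1) z F" "limitin Y (\<lambda>g. b g y2) z F"
    using proximalD[OF prox y12] .
  have lim2: "limitin (prod_topology Y Y) (\<lambda>g. prod_act b b g (y1, y2)) (z, z) F"
    unfolding limitin_pairwise prod_act_def using lim by (simp add: o_def)
  have ev: "eventually (\<lambda>g. prod_act b b g (y1, y2) \<in> S) F"
    using F(2) by (rule eventually_mono) (use inv y in \<open>simp add: invariant_set_def\<close>)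
  have "(z, z) \<in> S"
    using limitin_closedin[OF lim2 S ev] F(1) by simp
  then show ?thesis ..
qed

lemma minimal_flow_finite_translates_cover:
  assumes Y: "minimal_flow G Y b" and V: "openin Y V" "V \<noteq> {}"
  obtains hs where "set hs \<subseteq> carrier G" "\<forall>y\<in>topspace Y. \<exists>h\<in>set hs. b h y \<in> V"
proof -
  let ?pre = "\<lambda>g. {y \<in> topspace Y. b g y \<in> V}"
  have flow: "gflow G Y b"
    using Y unfolding minimal_flow_def by simp
  have "openin Y (?pre g)" if "g \<in> carrier G" for g
    using openin_continuous_map_preimage[OF gflow_continuous_map[OF flow that] V(1)] .
  moreover have "topspace Y \<subseteq> \<Union> (?pre ` carrier G)"
  proof
    fix y assume y: "y \<in> topspace Y"
    have "Y closure_of orbit G b y = topspace Y"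
      using Y y unfolding minimal_flow_def by simp
    then have "V \<inter> Y closure_of orbit G b y \<noteq> {}"
      using openin_subset[OF V(1)] V(2) by auto
    then have "V \<inter> orbit G b y \<noteq> {}"
      using openin_Int_closure_of_eq_empty[OF V(1)] by simp
    then show "y \<in> \<Union> (?pre ` carrier G)"
      unfolding orbit_def using y by blast
  qed
  ultimately have "\<exists>\<F>. finite \<F> \<and> \<F> \<subseteq> ?pre ` carrier G \<and> topspace Y \<subseteq> \<Union> \<F>"
    using gflow_compact_space[OF flow] unfolding compact_space_def by (intro compactinD) auto
  then obtain \<F> where \<F>: "finite \<F>" "\<F> \<subseteq> ?pre ` carrier G" "topspace Y \<subseteq> \<Union> \<F>"
    by blast
  then obtain H where H: "H \<subseteq> carrier G" "finite H" "topspace Y \<subseteq> \<Union> (?pre ` H)"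
    using finite_subset_image[OF \<F>(1,2)] by blast
  obtain hs where "set hs = H"
    using finite_list[OF H(2)] by blast
  then show thesis
    using that H by blast
qed

lemma incontractible_minimal_point_in_translates:
  assumes X: "incontractible G X a" and U: "openin X U" "x \<in> U" and hs: "set hs \<subseteq> carrier G"
  obtains u where "minimal_point G (power_space X (length hs)) (power_act a (length hs)) u"
    "\<forall>i<length hs. a (hs ! i) (u i) \<in> U"
proof -
  let ?k = "length hs"
  let ?X = "power_space X ?k"
  let ?O = "(\<Inter>i<?k. {v \<in> topspace ?X. a (hs ! i) (v i) \<in> U}) \<inter> topspace ?X"
  have flow: "gflow G X a"
    using X unfolding incontractible_def by simp
  have hs_i: "hs ! i \<in> carrier G" if "i < ?k" for i
    using hs that by auto
  have O_open: "openin ?X ?O"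
  proof (intro openin_INT finite_lessThan)
    fix i assume "i \<in> {..<?k}"
    then have "continuous_map ?X X (a (hs ! i) \<circ> (\<lambda>v. v i))"
      using continuous_map_power_coordinate gflow_continuous_map[OF flow hs_i]
      by (intro continuous_map_compose) auto
    then show "openin ?X {v \<in> topspace ?X. a (hs ! i) (v i) \<in> U}"
      using openin_continuous_map_preimage[OF _ U(1)] by (simp add: o_def)
  qed
  have "restrict (\<lambda>i. a (inv\<^bsub>G\<^esub> (hs ! i)) x) {..<?k} \<in> ?O"
  proof -
    have G: "group G" and x: "x \<in> topspace X"
      using gflow_group[OF flow] openin_subset[OF U(1)] U(2) by auto
    then have "a (inv\<^bsub>G\<^esub> (hs ! i)) x \<in> topspace X" if "i < ?k" for i
      using gflow_act_topspace[OF flow] hs_i[OF that] by (simp add: group.inv_closed)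
    then show ?thesis
      using gflow_act_act_inv[OF flow hs_i x] U(2) by (simp add: topspace_power_space)
  qed
  moreover have "?X closure_of {u. minimal_point G ?X (power_act a ?k) u} = topspace ?X"
    using X unfolding incontractible_def by simp
  ultimately have "?O \<inter> ?X closure_of {u. minimal_point G ?X (power_act a ?k) u} \<noteq> {}"
    by auto
  then have "?O \<inter> {u. minimal_point G ?X (power_act a ?k) u} \<noteq> {}"
    using openin_Int_closure_of_eq_empty[OF O_open] by simp
  then obtain u where "u \<in> ?O" "minimal_point G ?X (power_act a ?k) u"
    by blast
  then show thesis
    by (intro that) auto
qed

locale closed_invariant_relation =
  fixes G :: "('g, 'm) monoid_scheme"
    and X :: "'x topology" and a :: "'g \<Rightarrow> 'x \<Rightarrow> 'x"
    and Y :: "'y topology" and b :: "'g \<Rightarrow> 'y \<Rightarrow> 'y"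
    and W :: "('x \<times> 'y) set"
  assumes flow_X: "gflow G X a"
    and proximal_Y: "proximal G Y b"
    and closed_W: "closedin (prod_topology X Y) W"
    and invariant_W: "invariant_set G (prod_act a b) W"
    and fst_W: "fst ` W = topspace X"
begin

lemma flow_Y: "gflow G Y b"
  using proximal_Y unfolding proximal_def by simp

lemma W_subset: "W \<subseteq> topspace X \<times> topspace Y"
  using closedin_subset[OF closed_W] by simp

lemma act_W: "g \<in> carrier G \<Longrightarrow> (x, y) \<in> W \<Longrightarrow> (a g x, b g y) \<in> W"
  using invariant_W unfolding invariant_set_def prod_act_def by fastforce

definition related_upto :: "nat \<Rightarrow> nat \<Rightarrow> ((nat \<Rightarrow> 'x) \<times> 'y) set" where
  "related_upto n k = {(v, z) \<in> topspace (power_space X n) \<times> topspace Y. \<forall>i<k. (v i, z) \<in> W}"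

lemma closedin_coordinate_related:
  assumes "i < n"
  shows "closedin (prod_topology (power_space X n) Y)
           {p \<in> topspace (prod_topology (power_space X n) Y). (fst p i, snd p) \<in> W}"
proof -
  have "continuous_map (prod_topology (power_space X n) Y) (prod_topology X Y) (\<lambda>p. (fst p i, snd p))"
    using continuous_map_compose[OF continuous_map_fst continuous_map_power_coordinate[OF assms]]
    by (intro continuous_map_pairedI) (simp_all add: o_def continuous_map_snd)
  then show ?thesis
    using closed_W by (rule closedin_continuous_map_preimage)
qed

lemma closedin_related_upto:
  assumes "k \<le> n"
  shows "closedin (prod_topology (power_space X n) Y) (related_upto n k)"
proof -
  let ?T = "prod_topology (power_space X n) Y"
  let ?C = "\<lambda>i. {p \<in> topspace ?T. (fst p i, snd p) \<in> W}"
  have "related_upto n k = \<Inter> (insert (topspace ?T) (?C ` {..<k}))"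
    unfolding related_upto_def by auto
  moreover have "closedin ?T (\<Inter> (insert (topspace ?T) (?C ` {..<k})))"
  proof (rule closedin_Inter)
    fix S assume "S \<in> insert (topspace ?T) (?C ` {..<k})"
    then consider "S = topspace ?T" | i where "i < k" "S = ?C i"
      by blast
    then show "closedin ?T S"
    proof cases
      case 1
      then show ?thesis by (simp only: closedin_topspace)
    next
      case 2
      then show ?thesis using closedin_coordinate_related[of i n] assms by simp
    qed
  qed simp
  ultimately show ?thesis
    by simp
qed

lemma invariant_related_upto:
  assumes "k \<le> n"
  shows "invariant_set G (prod_act (power_act a n) b) (related_upto n k)"
  unfolding invariant_set_def
proof (intro ballI)
  fix g p assume g: "g \<in> carrier G" and p: "p \<in> related_upto n k"
  then obtain v z where p: "p = (v, z)" and v: "v \<in> topspace (power_space X n)"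
    and z: "z \<in> topspace Y" and vz: "\<forall>i<k. (v i, z) \<in> W"
    unfolding related_upto_def by blast
  have "\<forall>i<k. (power_act a n g v i, b g z) \<in> W"
    using act_W[OF g] vz assms by (simp add: power_act_def)
  then show "prod_act (power_act a n) b g p \<in> related_upto n k"
    unfolding related_upto_def p prod_act_def
    using gflow_act_topspace[OF gflow_power[OF flow_X] g v] gflow_act_topspace[OF flow_Y g z] by simp
qed

definition partner_triples :: "nat \<Rightarrow> nat \<Rightarrow> (nat \<Rightarrow> 'x) set \<Rightarrow> ((nat \<Rightarrow> 'x) \<times> 'y \<times> 'y) set" where
  "partner_triples n k M = {(w, z, y). w \<in> M \<and> (w, z) \<in> related_upto n k \<and> (w k, y) \<in> W}"

lemma closedin_partner_triples:
  assumes M: "closedin (power_space X n) M" and k: "k < n"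
  shows "closedin (prod_topology (power_space X n) (prod_topology Y Y)) (partner_triples n k M)"
proof -
  let ?T = "prod_topology (power_space X n) (prod_topology Y Y)"
  have "continuous_map ?T (power_space X n) fst"
    "continuous_map ?T (prod_topology (power_space X n) Y) (\<lambda>p. (fst p, fst (snd p)))"
    "continuous_map ?T (prod_topology X Y) (\<lambda>p. (fst p k, snd (snd p)))"
    using continuous_map_compose[OF continuous_map_fst continuous_map_power_coordinate[OF k]]
      continuous_map_compose[OF continuous_map_snd continuous_map_fst]
      continuous_map_compose[OF continuous_map_snd continuous_map_snd]
    by (auto intro!: continuous_map_pairedI continuous_map_fst simp: o_def)
  then have "closedin ?T ({p \<in> topspace ?T. fst p \<in> M}
      \<inter> {p \<in> topspace ?T. (fst p, fst (snd p)) \<in> related_upto n k}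
      \<inter> {p \<in> topspace ?T. (fst p k, snd (snd p)) \<in> W})"
    using M closedin_related_upto[OF less_imp_le[OF k]] closed_W
    by (intro closedin_Int closedin_continuous_map_preimage)
  moreover have "partner_triples n k M = {p \<in> topspace ?T. fst p \<in> M}
      \<inter> {p \<in> topspace ?T. (fst p, fst (snd p)) \<in> related_upto n k}
      \<inter> {p \<in> topspace ?T. (fst p k, snd (snd p)) \<in> W}"
    using W_subset unfolding partner_triples_def related_upto_def by auto
  ultimately show ?thesis
    by simp
qed

lemma invariant_partner_triples:
  assumes M: "invariant_set G (power_act a n) M" and k: "k < n"
  shows "invariant_set G (prod_act (power_act a n) (prod_act b b)) (partner_triples n k M)"
  unfolding invariant_set_def
proof (intro ballI)
  fix g p assume g: "g \<in> carrier G" and "p \<in> partner_triples n k M"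
  then obtain w z y where p: "p = (w, z, y)" and w: "w \<in> M"
    and wz: "(w, z) \<in> related_upto n k" and wy: "(w k, y) \<in> W"
    unfolding partner_triples_def by auto
  have "power_act a n g w \<in> M"
    using M g w unfolding invariant_set_def by blast
  moreover have "(power_act a n g w, b g z) \<in> related_upto n k"
    using invariant_related_upto[OF less_imp_le[OF k]] g wz
    unfolding invariant_set_def prod_act_def by fastforce
  moreover have "(power_act a n g w k, b g y) \<in> W"
    using act_W[OF g wy] k by (simp add: power_act_def)
  ultimately show "prod_act (power_act a n) (prod_act b b) g p \<in> partner_triples n k M"
    unfolding partner_triples_def p prod_act_def by simp
qed

text \<open>Proximality collapses the pair of partners $(z, y)$ onto the diagonal,
  and compactness of $X^n$ carries a point $w \in M$ along.\<close>

lemma related_upto_Suc: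
  assumes M: "closedin (power_space X n) M" "invariant_set G (power_act a n) M"
    and k: "k < n" and v: "v \<in> M" and vz: "(v, z) \<in> related_upto n k"
  shows "\<exists>w z'. w \<in> M \<and> (w, z') \<in> related_upto n (Suc k)"
proof -
  let ?Q = "partner_triples n k M"
  have "v k \<in> fst ` W"
    using vz k fst_W unfolding related_upto_def topspace_power_space by auto
  then obtain y where "(v k, y) \<in> W"
    by force
  then have "(z, y) \<in> snd ` ?Q"
    using v vz unfolding partner_triples_def by force
  moreover have "closedin (prod_topology Y Y) (snd ` ?Q)"
    using closed_map_snd[OF gflow_compact_space[OF gflow_power[OF flow_X]]]
      closedin_partner_triples[OF M(1) k]
    unfolding closed_map_def by blast
  moreover have "invariant_set G (prod_act b b) (snd ` ?Q)"
    using invariant_partner_triples[OF M(2) k] by (rule invariant_set_image_snd)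
  ultimately obtain z' where "(z', z') \<in> snd ` ?Q"
    using proximal_diagonal_point[OF proximal_Y] by blast
  then obtain w where "w \<in> M" "(w, z') \<in> related_upto n k" "(w k, z') \<in> W"
    unfolding partner_triples_def by auto
  then have "w \<in> M" and "(w, z') \<in> related_upto n (Suc k)"
    unfolding related_upto_def by (auto simp: less_Suc_eq)
  then show ?thesis
    by blast
qed

lemma minimal_orbit_closure_related_upto:
  assumes u: "minimal_point G (power_space X n) (power_act a n) u"
    and Y: "topspace Y \<noteq> {}" and "k \<le> n"
  shows "\<exists>v z. v \<in> power_space X n closure_of orbit G (power_act a n) u \<and> (v, z) \<in> related_upto n k"
  using \<open>k \<le> n\<close>
proof (induction k)
  case 0
  have "u \<in> topspace (power_space X n)"
    using u unfolding minimal_point_def by simp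
  then show ?case
    using in_closure_of_orbit_self[OF gflow_power[OF flow_X]] Y
    unfolding related_upto_def by fastforce
next
  case (Suc k)
  let ?M = "power_space X n closure_of orbit G (power_act a n) u"
  obtain v z where "v \<in> ?M" "(v, z) \<in> related_upto n k"
    using Suc by auto
  moreover have "invariant_set G (power_act a n) ?M"
    using u invariant_set_closure_of_orbit[OF gflow_power[OF flow_X]]
    unfolding minimal_point_def by blast
  moreover have "k < n"
    using Suc.prems by simp
  ultimately show ?case
    using related_upto_Suc[OF closedin_closure_of] by blast
qed

lemma minimal_point_related:
  assumes u: "minimal_point G (power_space X n) (power_act a n) u" and Y: "topspace Y \<noteq> {}"
  shows "\<exists>z. (u, z) \<in> related_upto n n"
proof -
  let ?F = "fst ` related_upto n n"
  obtain v z where v: "v \<in> power_space X n closure_of orbit G (power_act a n) u"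
    and vz: "(v, z) \<in> related_upto n n"
    using minimal_orbit_closure_related_upto[OF u Y order_refl] by blast
  have "closedin (power_space X n) ?F"
    using closed_map_fst[OF gflow_compact_space[OF flow_Y]] closedin_related_upto[OF order_refl]
    unfolding closed_map_def by blast
  moreover have "invariant_set G (power_act a n) ?F"
    using invariant_related_upto[OF order_refl] by (rule invariant_set_image_fst)
  moreover have "v \<in> ?F"
    using vz by force
  ultimately have "power_space X n closure_of orbit G (power_act a n) v \<subseteq> ?F"
    by (rule closure_of_orbit_subset)
  moreover have "u \<in> power_space X n closure_of orbit G (power_act a n) v"
    using minimal_point_in_closure_of_orbit[OF gflow_power[OF flow_X] u v] .
  ultimately show ?thesis
    by force
qed

lemma eq_Times_topspace:
  assumes Y: "minimal_flow G Y b" and X: "incontractible G X a"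
  shows "W = topspace X \<times> topspace Y"
proof (rule ccontr)
  let ?C = "topspace (prod_topology X Y) - W"
  assume "W \<noteq> topspace X \<times> topspace Y"
  then obtain x y where xy: "(x, y) \<in> ?C"
    using W_subset by auto
  have C_open: "openin (prod_topology X Y) ?C"
    using closed_W by (simp add: closedin_def)
  obtain U V where U: "openin X U" "x \<in> U" and V: "openin Y V" "y \<in> V"
    and UV: "U \<times> V \<subseteq> ?C"
    using openin_prod_topology_alt[THEN iffD1, rule_format, OF C_open xy] by blast
  obtain hs where hs: "set hs \<subseteq> carrier G" and cover: "\<forall>z\<in>topspace Y. \<exists>h\<in>set hs. b h z \<in> V"
    using minimal_flow_finite_translates_cover[OF Y V(1)] V(2) by blast
  obtain u where u: "minimal_point G (power_space X (length hs)) (power_act a (length hs)) u"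
    and uU: "\<forall>i<length hs. a (hs ! i) (u i) \<in> U"
    using incontractible_minimal_point_in_translates[OF X U hs] by blast
  obtain z where "(u, z) \<in> related_upto (length hs) (length hs)"
    using minimal_point_related[OF u] openin_subset[OF V(1)] V(2) by blast
  then have z: "z \<in> topspace Y" and uz: "\<forall>i<length hs. (u i, z) \<in> W"
    unfolding related_upto_def by auto
  obtain h where h: "h \<in> set hs" "b h z \<in> V"
    using cover z by blast
  then obtain i where i: "i < length hs" "hs ! i = h"
    by (meson in_set_conv_nth)
  have "(a h (u i), b h z) \<in> W"
    using act_W hs h(1) uz i by blast
  moreover have "(a h (u i), b h z) \<in> U \<times> V"
    using uU i h(2) by auto
  ultimately show False
    using UV by blast
qed

end

theorem proposition4p4:
  fixes G :: "('g, 'm) monoid_scheme"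
    and X :: "'x topology" and a :: "'g \<Rightarrow> 'x \<Rightarrow> 'x"
    and Y :: "'y topology" and b :: "'g \<Rightarrow> 'y \<Rightarrow> 'y"
  assumes "group G" and "countable (carrier G)"
    and "incontractible G X a"
    and "minimal_flow G Y b" and "proximal G Y b"
  shows "disjoint_flows G X a Y b"
  unfolding disjoint_flows_def
proof (intro allI impI, elim conjE)
  fix W
  assume "closedin (prod_topology X Y) W" "\<forall>g\<in>carrier G. \<forall>p\<in>W. (a g (fst p), b g (snd p)) \<in> W"
    and "fst ` W = topspace X"
  then interpret closed_invariant_relation G X a Y b W
    using assms(3,5)
    by unfold_locales (auto simp: incontractible_def invariant_set_def prod_act_def map_prod_def split_beta)
  show "W = topspace X \<times> topspace Y"
    using eq_Times_topspace assms(4,3) .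
qed

end
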